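(* Let $\alpha>0$, let $X_{0-}$ be a real-valued random variable and let $Z$ be a continuous stochastic process with $Z_0=0$, independent of $X_{0-}$, satisfying the crossing property (see context). For $\ell\in M$ define $\Gamma[\ell]_t=\mathbb{P}(\tau[\ell]\le t)$ with $\tau[\ell]=\inf\{t\ge0:X_{0-}+Z_t-\alpha\ell_t\le0\}$, and for $\Delta>0$ define $\Gamma_\Delta[\ell]_t=\mathbb{P}(\tau^\Delta[\ell]\le t)$ with $\tau^\Delta[\ell]=\inf\{t\ge0:X_{0-}+Z_{\Delta\lfloor t/\Delta\rfloor}-\alpha\ell_{\Delta\lfloor t/\Delta\rfloor}\le0\}$. Let $\Delta_n>0$ with $\Delta_n\to0$ and suppose $\ell^n\to\ell$ in $M$. Then $\lim_{n\to\infty}\Gamma_{\Delta_n}[\ell^n]=\Gamma[\ell]$ in $M$.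
   Context: Crossing property: for every stopping time $\tau$ with respect to the natural filtration of $X_{0-}+Z$ and every $h>0$, $\mathbb{P}(\tau<\infty,\ \inf_{0\le s\le h}(Z_{\tau+s}-Z_\tau)=0)=0$. $M$ is the set of càdlàg increasing functions $\ell:\overline{\mathbb{R}}\to[0,1]$ ($\overline{\mathbb{R}}$ the two-point compactification of $\mathbb{R}$) with $\ell_{0-}=0$ and $\ell_\infty=1$, with the topology: $\ell^n\to\ell$ iff $\ell^n_t\to\ell_t$ for all $t\in[0,\infty]$ at which $\ell$ is continuous. *)

theory Defs
  imports "HOL-Probability.Probability"
begin

definition in_M :: "(ereal \<Rightarrow> real) \<Rightarrow> bool" where
  "in_M l \<longleftrightarrow> mono l \<and> (\<forall>t. l t \<in> {0..1})
     \<and> (\<forall>t. continuous (at t within {t..}) l)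
     \<and> (\<forall>t. \<exists>L. (l \<longlongrightarrow> L) (at_left t))
     \<and> (l \<longlongrightarrow> 0) (at_left 0) \<and> l \<infinity> = 1"

definition conv_M :: "(nat \<Rightarrow> ereal \<Rightarrow> real) \<Rightarrow> (ereal \<Rightarrow> real) \<Rightarrow> bool" where
  "conv_M ls l \<longleftrightarrow> (\<forall>t. 0 \<le> t \<longrightarrow> isCont l t \<longrightarrow> (\<lambda>n. ls n t) \<longlonglongrightarrow> l t)"

definition nat_filtration :: "'a measure \<Rightarrow> (real \<Rightarrow> 'a \<Rightarrow> real) \<Rightarrow> ereal \<Rightarrow> 'a measure" where
  "nat_filtration P Y t = sigma (space P)
     {Y s -` B \<inter> space P | s B. 0 \<le> s \<and> ereal s \<le> t \<and> B \<in> sets borel}"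

definition crossing_property ::
  "'a measure \<Rightarrow> ('a \<Rightarrow> real) \<Rightarrow> (real \<Rightarrow> 'a \<Rightarrow> real) \<Rightarrow> bool" where
  "crossing_property P X Z \<longleftrightarrow>
     (\<forall>\<tau> :: 'a \<Rightarrow> ereal. stopping_time (nat_filtration P (\<lambda>s \<omega>. X \<omega> + Z s \<omega>)) \<tau> \<longrightarrow>
       (\<forall>h>0. AE \<omega> in P. \<not> (\<tau> \<omega> < \<infinity> \<and>
          (INF s\<in>{0..h}. Z (real_of_ereal (\<tau> \<omega>) + s) \<omega> - Z (real_of_ereal (\<tau> \<omega>)) \<omega>) = 0)))"

text \<open>Hitting time tau[l] (inf of the empty set is infinity).\<close>
definition hit_time ::
  "real \<Rightarrow> ('a \<Rightarrow> real) \<Rightarrow> (real \<Rightarrow> 'a \<Rightarrow> real) \<Rightarrow> (ereal \<Rightarrow> real) \<Rightarrow> 'a \<Rightarrow> ereal" where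
  "hit_time \<alpha> X Z l \<omega> = Inf {ereal t | t. 0 \<le> t \<and> X \<omega> + Z t \<omega> - \<alpha> * l (ereal t) \<le> 0}"

definition hit_time_disc ::
  "real \<Rightarrow> ('a \<Rightarrow> real) \<Rightarrow> (real \<Rightarrow> 'a \<Rightarrow> real) \<Rightarrow> real \<Rightarrow> (ereal \<Rightarrow> real) \<Rightarrow> 'a \<Rightarrow> ereal" where
  "hit_time_disc \<alpha> X Z \<Delta> l \<omega> = Inf {ereal t | t. 0 \<le> t \<and>
      X \<omega> + Z (\<Delta> * of_int \<lfloor>t / \<Delta>\<rfloor>) \<omega> - \<alpha> * l (ereal (\<Delta> * of_int \<lfloor>t / \<Delta>\<rfloor>)) \<le> 0}"

definition Gam ::
  "'a measure \<Rightarrow> real \<Rightarrow> ('a \<Rightarrow> real) \<Rightarrow> (real \<Rightarrow> 'a \<Rightarrow> real) \<Rightarrow> (ereal \<Rightarrow> real) \<Rightarrow> ereal \<Rightarrow> real" where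
  "Gam P \<alpha> X Z l t = measure P {\<omega> \<in> space P. hit_time \<alpha> X Z l \<omega> \<le> t}"

definition Gam_disc ::
  "'a measure \<Rightarrow> real \<Rightarrow> ('a \<Rightarrow> real) \<Rightarrow> (real \<Rightarrow> 'a \<Rightarrow> real) \<Rightarrow> real \<Rightarrow> (ereal \<Rightarrow> real) \<Rightarrow> ereal \<Rightarrow> real" where
  "Gam_disc P \<alpha> X Z \<Delta> l t = measure P {\<omega> \<in> space P. hit_time_disc \<alpha> X Z \<Delta> l \<omega> \<le> t}"

end

theory Submission
  imports Defs
begin

(* The path f = X\<^sub>0\<^sub>- + Z - \<alpha> l is lower semicontinuous, since Z is continuous and l is
   increasing and right-continuous. Hence \<tau>[l] \<le> r means that f \<le> 0 somewhere on [0, r], an event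
   decided by countably many times, so \<tau>[l] is a stopping time of the filtration of X\<^sub>0\<^sub>- + Z.

   Pathwise, if \<tau>[l] > r then f is bounded away from 0 on [0, r]; as l\<^sup>n is eventually below
   l(u) + \<epsilon> to the left of any continuity point u of l, the discretised barrier is not reached
   before r for large n. If \<tau>[l] < r, the crossing property at the stopping time \<tau>[l] lets Z drop
   strictly below its value at \<tau>[l] at some w < r; as l\<^sup>n is eventually above l(\<tau>[l]) - \<epsilon> to
   the right of \<tau>[l], a grid point just left of w is a discrete hit for large n.

   Fatou's lemma for sets turns this into limsup \<Gamma>\<^sub>\<Delta>\<^sub>n[l\<^sup>n]\<^sub>r \<le> \<Gamma>[l]\<^sub>r and
   liminf \<Gamma>\<^sub>\<Delta>\<^sub>n[l\<^sup>n]\<^sub>r \<ge> \<Gamma>[l]\<^sub>r\<^sub>-, which agree where \<Gamma>[l] is continuous. *)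

lemma eventually_ball_compact:
  fixes K :: "'b::topological_space set"
  assumes "compact K"
    and "\<And>s. s \<in> K \<Longrightarrow> \<exists>U. open U \<and> s \<in> U \<and> eventually (\<lambda>n. \<forall>v\<in>U \<inter> K. P n v) F"
  shows "eventually (\<lambda>n. \<forall>v\<in>K. P n v) F"
proof -
  obtain U where U: "\<And>s. s \<in> K \<Longrightarrow> open (U s) \<and> s \<in> U s \<and> eventually (\<lambda>n. \<forall>v\<in>U s \<inter> K. P n v) F"
    using assms(2) by metis
  obtain C where C: "C \<subseteq> K" "finite C" "K \<subseteq> (\<Union>c\<in>C. U c)"
    using compactE_image[OF assms(1), of K U] U by blast
  have "eventually (\<lambda>n. \<forall>c\<in>C. \<forall>v\<in>U c \<inter> K. P n v) F"
    using C U by (subst eventually_ball_finite) auto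
  then show ?thesis
    by eventually_elim (use C in blast)
qed

lemma exists_less_of_INF_ne_zero:
  fixes z :: "real \<Rightarrow> real"
  assumes "continuous_on {a..a + h} z" "0 \<le> h" "(INF s\<in>{0..h}. z (a + s) - z a) \<noteq> 0"
  shows "\<exists>w. a < w \<and> w \<le> a + h \<and> z w < z a"
proof -
  define I where "I = (\<lambda>s. z (a + s) - z a) ` {0..h}"
  have "continuous_on {0..h} (\<lambda>s. z (a + s) - z a)"
    by (intro continuous_intros continuous_on_compose2[OF assms(1)]) auto
  then have "bdd_below I"
    unfolding I_def by (intro bounded_imp_bdd_below compact_imp_bounded compact_continuous_image compact_Icc)
  moreover have "0 \<in> I" unfolding I_def using assms(2) by (auto intro!: image_eqI[of _ _ 0])
  ultimately have "Inf I \<le> 0" by (intro cInf_lower)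
  moreover have "Inf I \<noteq> 0" using assms(3) by (simp add: I_def)
  ultimately have "Inf I < 0" by simp
  then obtain s where "s \<in> {0..h}" "z (a + s) - z a < 0"
    using cInf_less_iff[of I 0] \<open>bdd_below I\<close> \<open>0 \<in> I\<close> unfolding I_def by auto
  moreover from this have "s \<noteq> 0" by auto
  ultimately show ?thesis by (intro exI[of _ "a + s"]) auto
qed

lemma isCont_ereal_approx_left:
  fixes f :: "ereal \<Rightarrow> real"
  assumes "isCont f (ereal r)" "a < f (ereal r)"
  shows "\<exists>c<r. a < f (ereal c)"
proof -
  have "(\<lambda>k. r - inverse (Suc k)) \<longlonglongrightarrow> r - 0"
    by (intro tendsto_diff tendsto_const LIMSEQ_inverse_real_of_nat)
  then have "(\<lambda>k. ereal (r - inverse (Suc k))) \<longlonglongrightarrow> ereal r"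
    unfolding lim_ereal by simp
  then have "(\<lambda>k. f (ereal (r - inverse (Suc k)))) \<longlonglongrightarrow> f (ereal r)"
    by (rule isCont_tendsto_compose[OF assms(1)])
  then have "eventually (\<lambda>k. a < f (ereal (r - inverse (Suc k)))) sequentially"
    using assms(2) by (rule order_tendstoD(1))
  then obtain k where "a < f (ereal (r - inverse (Suc k)))"
    by (auto simp: eventually_sequentially)
  then show ?thesis by (intro exI[of _ "r - inverse (Suc k)"]) auto
qed

lemma grid_point_below:
  fixes D w :: real
  assumes "0 < D" "0 \<le> w"
  obtains k :: nat where "w - D < D * real k" "D * real k \<le> w"
proof
  have "0 \<le> \<lfloor>w / D\<rfloor>" using assms by simp
  then have k: "real (nat \<lfloor>w / D\<rfloor>) = of_int \<lfloor>w / D\<rfloor>" by simp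
  have le: "of_int \<lfloor>w / D\<rfloor> \<le> w / D" and lt: "w / D < of_int \<lfloor>w / D\<rfloor> + 1" by linarith+
  have "D * of_int \<lfloor>w / D\<rfloor> \<le> w" "w < D * (of_int \<lfloor>w / D\<rfloor> + 1)"
    using mult_left_mono[OF le, of D] mult_strict_left_mono[OF lt assms(1)] assms(1) by simp_all
  then show "w - D < D * real (nat \<lfloor>w / D\<rfloor>)" "D * real (nat \<lfloor>w / D\<rfloor>) \<le> w"
    unfolding k using assms(1) by (simp_all add: field_simps)
qed

section \<open>Fatou-type bounds for measures of sets\<close>

lemma (in finite_measure) eventually_measure_less:
  assumes "\<And>n. A n \<in> sets M" "B \<in> sets M" "measure M B < a"
    and "AE x in M. x \<notin> B \<longrightarrow> eventually (\<lambda>n. x \<notin> A n) sequentially"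
  shows "eventually (\<lambda>n. measure M (A n) < a) sequentially"
proof -
  define C where "C m = (\<Union>n\<in>{m..}. A n)" for m
  have C: "C m \<in> sets M" for m
    unfolding C_def using assms(1) by (intro sets.countable_UN) auto
  have "decseq C" unfolding decseq_def C_def by (intro allI impI UN_mono) auto
  with C have "(\<lambda>m. measure M (C m)) \<longlonglongrightarrow> measure M (\<Inter>m. C m)"
    by (intro finite_Lim_measure_decseq) auto
  moreover have "AE x in M. x \<in> (\<Inter>m. C m) \<longrightarrow> x \<in> B"
    using assms(4) by eventually_elim (auto simp: C_def eventually_sequentially)
  then have "measure M (\<Inter>m. C m) < a"
    using finite_measure_mono_AE[OF _ assms(2)] assms(3) by (meson le_less_trans)
  ultimately have "eventually (\<lambda>m. measure M (C m) < a) sequentially"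
    by (rule order_tendstoD(2))
  then show ?thesis
  proof eventually_elim
    case (elim m)
    have "A m \<subseteq> C m" by (auto simp: C_def)
    then show ?case using finite_measure_mono[OF _ C] elim by (meson le_less_trans)
  qed
qed

lemma (in finite_measure) eventually_measure_greater:
  assumes "\<And>n. A n \<in> sets M" "B \<in> sets M" "a < measure M B"
    and "AE x in M. x \<in> B \<longrightarrow> eventually (\<lambda>n. x \<in> A n) sequentially"
  shows "eventually (\<lambda>n. a < measure M (A n)) sequentially"
proof -
  define D where "D m = (\<Inter>n\<in>{m..}. A n)" for m
  have D: "D m \<in> sets M" for m
    unfolding D_def using assms(1) by (intro sets.countable_INT) auto
  have "incseq D" by (auto simp: incseq_def D_def)
  with D have "(\<lambda>m. measure M (D m)) \<longlonglongrightarrow> measure M (\<Union>m. D m)"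
    by (intro finite_Lim_measure_incseq) auto
  moreover have "a < measure M (\<Union>m. D m)"
  proof -
    have "AE x in M. x \<in> B \<longrightarrow> x \<in> (\<Union>m. D m)"
      using assms(4) by eventually_elim (auto simp: D_def eventually_sequentially)
    moreover have "(\<Union>m. D m) \<in> sets M" using D by (intro sets.countable_UN) auto
    ultimately show ?thesis
      using finite_measure_mono_AE assms(3) by (meson less_le_trans)
  qed
  ultimately have "eventually (\<lambda>m. a < measure M (D m)) sequentially"
    by (rule order_tendstoD(1))
  then show ?thesis
  proof eventually_elim
    case (elim m)
    have "D m \<subseteq> A m" by (auto simp: D_def)
    then show ?case using finite_measure_mono[OF _ assms(1)] elim by (meson less_le_trans)
  qed
qed

lemma (in finite_measure) tendsto_measure_of_eventually:
  assumes "\<And>n. Measurable.pred M (A n)" "\<And>c. Measurable.pred M (B c)"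
    and "AE x in M. \<not> B r x \<longrightarrow> eventually (\<lambda>n. \<not> A n x) sequentially"
    and "\<And>c. c < r \<Longrightarrow> AE x in M. B c x \<longrightarrow> eventually (\<lambda>n. A n x) sequentially"
    and "\<And>a. a < measure M {x \<in> space M. B r x} \<Longrightarrow> \<exists>c<r. a < measure M {x \<in> space M. B c x}"
  shows "(\<lambda>n. measure M {x \<in> space M. A n x}) \<longlonglongrightarrow> measure M {x \<in> space M. B r x}"
proof (rule order_tendstoI)
  have sets: "{x \<in> space M. A n x} \<in> sets M" "{x \<in> space M. B c x} \<in> sets M" for n c
    using assms(1,2) by (simp_all add: pred_def)
  fix a
  show "eventually (\<lambda>n. a < measure M {x \<in> space M. A n x}) sequentially"
    if a: "a < measure M {x \<in> space M. B r x}"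
  proof -
    obtain c where "c < r" "a < measure M {x \<in> space M. B c x}" using assms(5)[OF a] by blast
    from assms(4)[OF \<open>c < r\<close>] AE_space
    have "AE x in M. x \<in> {x \<in> space M. B c x} \<longrightarrow> eventually (\<lambda>n. x \<in> {x \<in> space M. A n x}) sequentially"
      by eventually_elim simp
    with sets show ?thesis
      by (intro eventually_measure_greater[OF _ _ \<open>a < measure M {x \<in> space M. B c x}\<close>])
  qed
  show "eventually (\<lambda>n. measure M {x \<in> space M. A n x} < a) sequentially"
    if "measure M {x \<in> space M. B r x} < a"
  proof -
    from assms(3)
    have "AE x in M. x \<notin> {x \<in> space M. B r x} \<longrightarrow> eventually (\<lambda>n. x \<notin> {x \<in> space M. A n x}) sequentially"
      by eventually_elim (auto elim: eventually_mono)
    with sets show ?thesis by (intro eventually_measure_less[OF _ _ that])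
  qed
qed

section \<open>Increasing cadlag barriers\<close>

lemma in_M_mono: "in_M l \<Longrightarrow> mono l"
  by (simp add: in_M_def)

lemma in_M_right_continuous:
  assumes "in_M l" "0 < e"
  shows "\<exists>d>0. \<forall>v. s \<le> v \<longrightarrow> v < s + d \<longrightarrow> l (ereal v) < l (ereal s) + e"
proof -
  have "(l \<longlongrightarrow> l (ereal s)) (at (ereal s) within {ereal s..})"
    using assms(1) by (simp add: in_M_def continuous_within)
  then have "eventually (\<lambda>x. l x < l (ereal s) + e) (at (ereal s) within {ereal s..})"
    using assms(2) by (intro order_tendstoD(2)) auto
  then have "eventually (\<lambda>x. ereal x \<noteq> ereal s \<longrightarrow> ereal x \<in> {ereal s..} \<longrightarrow>
      l (ereal x) < l (ereal s) + e) (nhds s)"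
    by (simp add: eventually_at_filter nhds_ereal eventually_filtermap)
  then obtain d where "d > 0" and d: "\<And>x. dist x s < d \<Longrightarrow> x \<noteq> s \<Longrightarrow> s \<le> x \<Longrightarrow>
      l (ereal x) < l (ereal s) + e"
    unfolding eventually_nhds_metric by auto
  have "l (ereal v) < l (ereal s) + e" if "s \<le> v" "v < s + d" for v
    using d[of v] that assms(2) by (cases "v = s") (auto simp: dist_real_def)
  with \<open>d > 0\<close> show ?thesis by blast
qed

lemma in_M_isCont_between:
  assumes "in_M l" "a < b"
  shows "\<exists>u. a < u \<and> u < b \<and> isCont l (ereal u)"
proof -
  have "mono (l \<circ> ereal)"
    using in_M_mono[OF assms(1)] by (auto simp: mono_def)
  then obtain u where u: "u \<in> {a<..<b}" "isCont (l \<circ> ereal) u"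
    using open_minus_countable[OF mono_ctble_discont, of "l \<circ> ereal" "{a<..<b}"] assms(2) by auto
  have "(l \<longlongrightarrow> l (ereal u)) (at (ereal u))"
    using u(2) unfolding at_ereal filterlim_filtermap by (simp add: continuous_at o_def)
  then have "isCont l (ereal u)" by (simp add: continuous_at)
  with u(1) show ?thesis by auto
qed

lemma lower_semicontinuous_minus_in_M:
  fixes y :: "real \<Rightarrow> real"
  assumes "in_M l" "\<alpha> > 0" "continuous_on {0..} y" "0 \<le> c" "m < y c - \<alpha> * l (ereal c)"
  shows "\<exists>d>0. \<forall>v. 0 \<le> v \<longrightarrow> \<bar>v - c\<bar> < d \<longrightarrow> m < y v - \<alpha> * l (ereal v)"
proof -
  define e where "e = (y c - \<alpha> * l (ereal c) - m) / 2"
  have "e > 0" using assms(5) by (simp add: e_def)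
  have "continuous (at c within {0..}) y"
    using assms(3,4) continuous_on_eq_continuous_within by auto
  then obtain d1 where "d1 > 0" and d1: "\<And>v. v \<in> {0..} \<Longrightarrow> dist v c < d1 \<Longrightarrow> dist (y v) (y c) < e"
    using \<open>e > 0\<close> unfolding continuous_within_eps_delta by blast
  obtain d2 where "d2 > 0" and d2: "\<And>v. c \<le> v \<Longrightarrow> v < c + d2 \<Longrightarrow> l (ereal v) < l (ereal c) + e / \<alpha>"
    using in_M_right_continuous[OF assms(1), of "e / \<alpha>" c] \<open>e > 0\<close> assms(2) by auto
  have "m < y v - \<alpha> * l (ereal v)" if v: "0 \<le> v" "\<bar>v - c\<bar> < min d1 d2" for v
  proof -
    have "y c - e < y v" using d1[of v] v by (auto simp: dist_real_def)
    moreover have "l (ereal v) < l (ereal c) + e / \<alpha>"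
    proof (cases "c \<le> v")
      case True then show ?thesis using d2 v by auto
    next
      case False
      then have "l (ereal v) \<le> l (ereal c)" by (auto intro: monoD[OF in_M_mono[OF assms(1)]])
      then show ?thesis using \<open>e > 0\<close> assms(2) by (smt (verit) divide_pos_pos)
    qed
    then have "\<alpha> * l (ereal v) < \<alpha> * l (ereal c) + e"
      using assms(2) by (simp add: field_simps)
    ultimately show ?thesis unfolding e_def by (simp add: field_simps)
  qed
  with \<open>d1 > 0\<close> \<open>d2 > 0\<close> show ?thesis by (intro exI[of _ "min d1 d2"]) auto
qed

lemma conv_M_eventually_upper_bound:
  assumes "in_M l" "\<And>n. in_M (ls n)" "conv_M ls l" "0 \<le> a" "a < b" "0 < e"
  shows "eventually (\<lambda>n. \<forall>v\<le>a. ls n (ereal v) < l (ereal b) + e) sequentially"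
proof -
  \<comment> \<open>conv_M controls ls n only at continuity points of l; monotonicity spreads the bound.\<close>
  obtain u where u: "a < u" "u < b" "isCont l (ereal u)"
    using in_M_isCont_between[OF assms(1,5)] by blast
  have "(\<lambda>n. ls n (ereal u)) \<longlonglongrightarrow> l (ereal u)"
    using assms(3,4) u unfolding conv_M_def by auto
  then have "eventually (\<lambda>n. ls n (ereal u) < l (ereal u) + e) sequentially"
    using assms(6) by (intro order_tendstoD(2)) auto
  then show ?thesis
  proof eventually_elim
    case (elim n)
    show ?case
    proof (intro allI impI)
      fix v assume "v \<le> a"
      then have "ls n (ereal v) \<le> ls n (ereal u)" "l (ereal u) \<le> l (ereal b)"
        using u by (auto intro: monoD[OF in_M_mono[OF assms(1)]] monoD[OF in_M_mono[OF assms(2)]])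
      with elim show "ls n (ereal v) < l (ereal b) + e" by linarith
    qed
  qed
qed

lemma conv_M_eventually_lower_bound:
  assumes "in_M l" "\<And>n. in_M (ls n)" "conv_M ls l" "0 \<le> a" "a < b" "0 < e"
  shows "eventually (\<lambda>n. \<forall>v\<ge>b. l (ereal a) - e < ls n (ereal v)) sequentially"
proof -
  obtain u where u: "a < u" "u < b" "isCont l (ereal u)"
    using in_M_isCont_between[OF assms(1,5)] by blast
  have "(\<lambda>n. ls n (ereal u)) \<longlonglongrightarrow> l (ereal u)"
    using assms(3,4) u unfolding conv_M_def by auto
  then have "eventually (\<lambda>n. l (ereal u) - e < ls n (ereal u)) sequentially"
    using assms(6) by (intro order_tendstoD(1)) auto
  then show ?thesis
  proof eventually_elim
    case (elim n)
    show ?case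
    proof (intro allI impI)
      fix v assume "b \<le> v"
      then have "l (ereal a) \<le> l (ereal u)" "ls n (ereal u) \<le> ls n (ereal v)"
        using u by (auto intro: monoD[OF in_M_mono[OF assms(1)]] monoD[OF in_M_mono[OF assms(2)]])
      with elim show "l (ereal a) - e < ls n (ereal v)" by linarith
    qed
  qed
qed

lemma conv_M_eventually_pos_on_Icc:
  fixes y :: "real \<Rightarrow> real"
  assumes "in_M l" "\<And>n. in_M (ls n)" "\<alpha> > 0" "conv_M ls l" "continuous_on {0..} y"
    and pos: "\<And>s. s \<in> {0..r} \<Longrightarrow> 0 < y s - \<alpha> * l (ereal s)"
  shows "eventually (\<lambda>n. \<forall>v\<in>{0..r}. 0 < y v - \<alpha> * ls n (ereal v)) sequentially"
proof (rule eventually_ball_compact)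
  fix s assume s: "s \<in> {0..r}"
  define c where "c = (y s - \<alpha> * l (ereal s)) / 3"
  have "c > 0" using pos[OF s] by (simp add: c_def)
  have "continuous (at s within {0..}) y"
    using assms(5) s continuous_on_eq_continuous_within by auto
  then obtain d2 where "d2 > 0" and d2: "\<And>v. v \<in> {0..} \<Longrightarrow> dist v s < d2 \<Longrightarrow> dist (y v) (y s) < c"
    using \<open>c > 0\<close> unfolding continuous_within_eps_delta by blast
  obtain d1 where "d1 > 0" and d1: "\<And>v. s \<le> v \<Longrightarrow> v < s + d1 \<Longrightarrow> l (ereal v) < l (ereal s) + c / \<alpha>"
    using in_M_right_continuous[OF assms(1), of "c / \<alpha>" s] \<open>c > 0\<close> assms(3) by auto
  define \<delta> where "\<delta> = min d1 d2 / 3"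
  have "0 < \<delta>" "\<delta> < d2" using \<open>d1 > 0\<close> \<open>d2 > 0\<close> by (auto simp: \<delta>_def)
  have l_near: "l (ereal (s + 2 * \<delta>)) < l (ereal s) + c / \<alpha>"
    using d1 \<open>0 < \<delta>\<close> by (auto simp: \<delta>_def)
  have "eventually (\<lambda>n. \<forall>v\<le>s + \<delta>. ls n (ereal v) < l (ereal (s + 2 * \<delta>)) + c / \<alpha>) sequentially"
    using s \<open>0 < \<delta>\<close> \<open>c > 0\<close> assms(3)
    by (intro conv_M_eventually_upper_bound[OF assms(1,2,4)]) auto
  then have "eventually (\<lambda>n. \<forall>v\<in>{s - d2<..<s + \<delta>} \<inter> {0..r}. 0 < y v - \<alpha> * ls n (ereal v)) sequentially"
  proof eventually_elim
    case (elim n)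
    show ?case
    proof
      fix v assume v: "v \<in> {s - d2<..<s + \<delta>} \<inter> {0..r}"
      then have "ls n (ereal v) < l (ereal (s + 2 * \<delta>)) + c / \<alpha>" using elim by auto
      then have "\<alpha> * ls n (ereal v) < \<alpha> * l (ereal (s + 2 * \<delta>)) + c"
        using assms(3) by (simp add: field_simps)
      moreover have "\<alpha> * l (ereal (s + 2 * \<delta>)) < \<alpha> * l (ereal s) + c"
        using l_near assms(3) by (simp add: field_simps)
      moreover have "dist v s < d2" using v \<open>\<delta> < d2\<close> by (auto simp: dist_real_def)
      then have "y s - c < y v" using d2[of v] v by (auto simp: dist_real_def)
      ultimately show "0 < y v - \<alpha> * ls n (ereal v)"
        unfolding c_def by (simp add: field_simps)
    qed
  qed
  then show "\<exists>U. open U \<and> s \<in> U \<and> eventually (\<lambda>n. \<forall>v\<in>U \<inter> {0..r}. 0 < y v - \<alpha> * ls n (ereal v)) sequentially"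
    using \<open>0 < \<delta>\<close> \<open>d2 > 0\<close> by (intro exI[of _ "{s - d2<..<s + \<delta>}"]) auto
qed simp

lemma exists_rat_near_nonpos:
  fixes y :: "real \<Rightarrow> real"
  assumes "in_M l" "\<alpha> > 0" "continuous_on {0..} y"
    and "0 \<le> s" "s < c" "y s - \<alpha> * l (ereal s) \<le> 0" "0 < e"
  shows "\<exists>q::rat. of_rat q \<in> {0..c} \<and> y (of_rat q) - \<alpha> * l (ereal (of_rat q)) < e"
proof -
  \<comment> \<open>Approximate s from the right: y is continuous there and l can only grow.\<close>
  have "continuous (at s within {0..}) y"
    using assms(3,4) continuous_on_eq_continuous_within by auto
  then obtain d where "d > 0" and d: "\<And>v. v \<in> {0..} \<Longrightarrow> dist v s < d \<Longrightarrow> dist (y v) (y s) < e"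
    using assms(7) unfolding continuous_within_eps_delta by blast
  have "s < min (s + d) c" using assms(5) \<open>d > 0\<close> by auto
  then obtain q where q: "s < of_rat q" "of_rat q < min (s + d) c"
    using of_rat_dense by blast
  have q0: "0 \<le> (of_rat q :: real)" using q assms(4) by linarith
  then have "y (of_rat q) < y s + e"
    using d[of "of_rat q"] q by (auto simp: dist_real_def)
  moreover have "l (ereal s) \<le> l (ereal (of_rat q))"
    using q by (auto intro: monoD[OF in_M_mono[OF assms(1)]])
  ultimately have "y (of_rat q) - \<alpha> * l (ereal (of_rat q)) < e"
    using assms(2,6) by (smt (verit) mult_left_mono)
  with q q0 show ?thesis by (intro exI[of _ q]) auto
qed

lemma pos_minus_in_M_bounded_away:
  fixes y :: "real \<Rightarrow> real"
  assumes "in_M l" "\<alpha> > 0" "continuous_on {0..} y"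
    and pos: "\<And>s. s \<in> {0..c} \<Longrightarrow> 0 < y s - \<alpha> * l (ereal s)"
  shows "\<exists>k::nat. \<forall>s\<in>{0..c}. inverse (Suc k) < y s - \<alpha> * l (ereal s)"
proof -
  have "eventually (\<lambda>k. \<forall>v\<in>{0..c}. inverse (Suc k) < y v - \<alpha> * l (ereal v)) sequentially"
  proof (rule eventually_ball_compact)
    fix s assume s: "s \<in> {0..c}"
    define m where "m = (y s - \<alpha> * l (ereal s)) / 2"
    obtain d where "d > 0" and d: "\<And>v. 0 \<le> v \<Longrightarrow> \<bar>v - s\<bar> < d \<Longrightarrow> m < y v - \<alpha> * l (ereal v)"
      using lower_semicontinuous_minus_in_M[OF assms(1-3), of s m] s pos[OF s] by (auto simp: m_def)
    have "eventually (\<lambda>k. inverse (Suc k) < m) sequentially"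
      using pos[OF s] by (intro order_tendstoD(2)[OF LIMSEQ_inverse_real_of_nat]) (simp add: m_def)
    then have "eventually (\<lambda>k. \<forall>v\<in>ball s d \<inter> {0..c}. inverse (Suc k) < y v - \<alpha> * l (ereal v)) sequentially"
    proof eventually_elim
      case (elim k)
      show ?case
      proof
        fix v assume "v \<in> ball s d \<inter> {0..c}"
        then have "m < y v - \<alpha> * l (ereal v)" using d by (auto simp: dist_real_def abs_minus_commute)
        with elim show "inverse (Suc k) < y v - \<alpha> * l (ereal v)" by linarith
      qed
    qed
    then show "\<exists>U. open U \<and> s \<in> U \<and>
        eventually (\<lambda>k. \<forall>v\<in>U \<inter> {0..c}. inverse (Suc k) < y v - \<alpha> * l (ereal v)) sequentially"
      using \<open>d > 0\<close> by (intro exI[of _ "ball s d"]) auto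
  qed simp
  then show ?thesis by (auto simp: eventually_sequentially)
qed

lemma exists_nonpos_iff_rational_approx:
  fixes y :: "real \<Rightarrow> real"
  assumes "in_M l" "\<alpha> > 0" "continuous_on {0..} y" "0 \<le> c"
  defines "f \<equiv> \<lambda>s. y s - \<alpha> * l (ereal s)"
  shows "(\<exists>s\<in>{0..c}. f s \<le> 0) \<longleftrightarrow>
    (\<forall>k::nat. f c < inverse (Suc k) \<or> (\<exists>q::rat. of_rat q \<in> {0..c} \<and> f (of_rat q) < inverse (Suc k)))"
proof
  assume "\<exists>s\<in>{0..c}. f s \<le> 0"
  then obtain s where s: "0 \<le> s" "s \<le> c" "f s \<le> 0" by auto
  show "\<forall>k. f c < inverse (Suc k) \<or> (\<exists>q. of_rat q \<in> {0..c} \<and> f (of_rat q) < inverse (Suc k))"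
  proof
    fix k :: nat
    show "f c < inverse (Suc k) \<or> (\<exists>q. of_rat q \<in> {0..c} \<and> f (of_rat q) < inverse (Suc k))"
    proof (cases "s = c")
      case True
      with s(3) have "f c \<le> 0" by simp
      also have "0 < inverse (real (Suc k))" by simp
      finally show ?thesis by blast
    next
      case False
      then show ?thesis
        using exists_rat_near_nonpos[OF assms(1-3), of s c "inverse (Suc k)"] s unfolding f_def by auto
    qed
  qed
next
  assume approx: "\<forall>k. f c < inverse (Suc k) \<or> (\<exists>q. of_rat q \<in> {0..c} \<and> f (of_rat q) < inverse (Suc k))"
  show "\<exists>s\<in>{0..c}. f s \<le> 0"
  proof (rule ccontr)
    assume "\<not> ?thesis"
    then have "\<And>s. s \<in> {0..c} \<Longrightarrow> 0 < y s - \<alpha> * l (ereal s)"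
      by (auto simp: f_def not_le)
    then obtain k where k: "\<forall>s\<in>{0..c}. inverse (Suc k) < f s"
      using pos_minus_in_M_bounded_away[OF assms(1-3)] unfolding f_def by blast
    then have "\<not> f c < inverse (Suc k)" using assms(4) by (auto simp: not_less less_imp_le)
    moreover have "\<not> f (of_rat q) < inverse (Suc k)" if "of_rat q \<in> {0..c}" for q
      using k that by (auto simp: not_less less_imp_le)
    ultimately show False using approx by blast
  qed
qed

section \<open>Hitting times\<close>

lemma hit_time_nonneg: "0 \<le> hit_time \<alpha> X Z l \<omega>"
  unfolding hit_time_def by (rule Inf_greatest) auto

lemma hit_time_le_iff:
  assumes "in_M l" "\<alpha> > 0" "continuous_on {0..} (\<lambda>t. Z t \<omega>)"
  shows "hit_time \<alpha> X Z l \<omega> \<le> ereal c \<longleftrightarrow> (\<exists>s\<in>{0..c}. X \<omega> + Z s \<omega> - \<alpha> * l (ereal s) \<le> 0)"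
proof
  assume "\<exists>s\<in>{0..c}. X \<omega> + Z s \<omega> - \<alpha> * l (ereal s) \<le> 0"
  then obtain s where s: "0 \<le> s" "s \<le> c" "X \<omega> + Z s \<omega> - \<alpha> * l (ereal s) \<le> 0" by auto
  then have "hit_time \<alpha> X Z l \<omega> \<le> ereal s"
    unfolding hit_time_def by (intro Inf_lower) auto
  then show "hit_time \<alpha> X Z l \<omega> \<le> ereal c" using s(2) by (simp add: order_trans)
next
  assume le: "hit_time \<alpha> X Z l \<omega> \<le> ereal c"
  show "\<exists>s\<in>{0..c}. X \<omega> + Z s \<omega> - \<alpha> * l (ereal s) \<le> 0"
  proof (rule ccontr)
    assume none: "\<not> ?thesis"
    \<comment> \<open>By lower semicontinuity the path stays positive a little beyond c.\<close>
    obtain c' where "c < c'" and c': "\<And>t. 0 \<le> t \<Longrightarrow> X \<omega> + Z t \<omega> - \<alpha> * l (ereal t) \<le> 0 \<Longrightarrow> c' \<le> t"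
    proof (cases "c < 0")
      case True
      then show ?thesis by (intro that[of 0]) auto
    next
      case False
      have "continuous_on {0..} (\<lambda>t. X \<omega> + Z t \<omega>)"
        by (intro continuous_intros assms(3))
      moreover have "0 < X \<omega> + Z c \<omega> - \<alpha> * l (ereal c)"
        using none False by (auto simp: not_le)
      ultimately obtain d where "d > 0" and d: "\<And>v. 0 \<le> v \<Longrightarrow> \<bar>v - c\<bar> < d \<Longrightarrow> 0 < X \<omega> + Z v \<omega> - \<alpha> * l (ereal v)"
        using lower_semicontinuous_minus_in_M[OF assms(1,2), of "\<lambda>t. X \<omega> + Z t \<omega>" c 0] False by auto
      have "c + d \<le> t" if "0 \<le> t" "X \<omega> + Z t \<omega> - \<alpha> * l (ereal t) \<le> 0" for t
        using none d[of t] that by force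
      with \<open>d > 0\<close> show ?thesis by (intro that[of "c + d"]) auto
    qed
    then have "ereal c' \<le> hit_time \<alpha> X Z l \<omega>"
      unfolding hit_time_def by (intro Inf_greatest) auto
    with le \<open>c < c'\<close> show False by (meson ereal_less_eq(3) leD order_trans)
  qed
qed

lemma nonpos_at_hit_time:
  assumes "in_M l" "\<alpha> > 0" "continuous_on {0..} (\<lambda>t. Z t \<omega>)" "hit_time \<alpha> X Z l \<omega> = ereal a"
  shows "X \<omega> + Z a \<omega> - \<alpha> * l (ereal a) \<le> 0"
proof -
  obtain s where s: "s \<in> {0..a}" "X \<omega> + Z s \<omega> - \<alpha> * l (ereal s) \<le> 0"
    using hit_time_le_iff[of l \<alpha> Z \<omega> X a] assms by auto
  then have "hit_time \<alpha> X Z l \<omega> \<le> ereal s"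
    unfolding hit_time_def by (intro Inf_lower) auto
  with s assms(4) have "s = a" by auto
  with s show ?thesis by simp
qed

lemma hit_time_disc_le_iff:
  assumes "\<Delta> > 0"
  shows "hit_time_disc \<alpha> X Z \<Delta> l \<omega> \<le> ereal c \<longleftrightarrow>
    (\<exists>k::nat. \<Delta> * real k \<le> c \<and> X \<omega> + Z (\<Delta> * real k) \<omega> - \<alpha> * l (ereal (\<Delta> * real k)) \<le> 0)"
    (is "_ \<longleftrightarrow> (\<exists>k. _ \<and> ?hit k)")
proof
  assume "\<exists>k. \<Delta> * real k \<le> c \<and> ?hit k"
  then obtain k where k: "\<Delta> * real k \<le> c" "?hit k" by blast
  have "\<lfloor>\<Delta> * real k / \<Delta>\<rfloor> = int k" using assms by simp
  then have "hit_time_disc \<alpha> X Z \<Delta> l \<omega> \<le> ereal (\<Delta> * real k)"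
    unfolding hit_time_disc_def using k(2) assms by (intro Inf_lower) auto
  with k(1) show "hit_time_disc \<alpha> X Z \<Delta> l \<omega> \<le> ereal c" by (simp add: order_trans)
next
  assume le: "hit_time_disc \<alpha> X Z \<Delta> l \<omega> \<le> ereal c"
  show "\<exists>k. \<Delta> * real k \<le> c \<and> ?hit k"
  proof (rule ccontr)
    assume none: "\<not> ?thesis"
    define c' where "c' = \<Delta> * (of_int \<lfloor>c / \<Delta>\<rfloor> + 1)"
    have "c / \<Delta> < of_int \<lfloor>c / \<Delta>\<rfloor> + 1" by linarith
    then have "c < c'" using assms unfolding c'_def by (simp add: field_simps)
    have "ereal c' \<le> hit_time_disc \<alpha> X Z \<Delta> l \<omega>"
      unfolding hit_time_disc_def
    proof (rule Inf_greatest, clarify)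
      fix t assume t: "0 \<le> t"
        "X \<omega> + Z (\<Delta> * of_int \<lfloor>t / \<Delta>\<rfloor>) \<omega> - \<alpha> * l (ereal (\<Delta> * of_int \<lfloor>t / \<Delta>\<rfloor>)) \<le> 0"
      define k where "k = nat \<lfloor>t / \<Delta>\<rfloor>"
      have rk: "real k = of_int \<lfloor>t / \<Delta>\<rfloor>" using t assms by (simp add: k_def)
      then have "?hit k" using t(2) by simp
      then have "\<not> \<Delta> * real k \<le> c" using none by blast
      then have "\<lfloor>c / \<Delta>\<rfloor> < \<lfloor>t / \<Delta>\<rfloor>" using assms rk by (simp add: field_simps floor_less_iff)
      then have "of_int \<lfloor>c / \<Delta>\<rfloor> + 1 \<le> t / \<Delta>" by linarith
      then show "ereal c' \<le> ereal t" using assms unfolding c'_def by (simp add: field_simps)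
    qed
    with le \<open>c < c'\<close> show False by (meson ereal_less_eq(3) leD order_trans)
  qed
qed

lemma hit_time_le_measurable:
  assumes "in_M l" "\<alpha> > 0"
    and "\<And>\<omega>. \<omega> \<in> space M \<Longrightarrow> continuous_on {0..} (\<lambda>t. Z t \<omega>)"
    and "\<And>q. 0 \<le> q \<Longrightarrow> q \<le> c \<Longrightarrow> (\<lambda>\<omega>. X \<omega> + Z q \<omega>) \<in> borel_measurable M"
  shows "Measurable.pred M (\<lambda>\<omega>. hit_time \<alpha> X Z l \<omega> \<le> ereal c)"
proof (cases "c < 0")
  case True
  then have "ereal c < 0" by simp
  then have "ereal c < hit_time \<alpha> X Z l \<omega>" for \<omega>
    using hit_time_nonneg by (rule less_le_trans)
  then have "\<not> hit_time \<alpha> X Z l \<omega> \<le> ereal c" for \<omega>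
    by (simp add: not_le)
  then show ?thesis by simp
next
  case False
  define f where "f \<omega> s = X \<omega> + Z s \<omega> - \<alpha> * l (ereal s)" for \<omega> s
  define approx where "approx \<omega> \<longleftrightarrow> (\<forall>k::nat. f \<omega> c < inverse (Suc k) \<or>
      (\<exists>q::rat. of_rat q \<in> {0..c} \<and> f \<omega> (of_rat q) < inverse (Suc k)))" for \<omega>
  have meas: "Measurable.pred M (\<lambda>\<omega>. f \<omega> q < e)" if "0 \<le> q" "q \<le> c" for q e
  proof -
    have "(\<lambda>\<omega>. f \<omega> q) \<in> borel_measurable M"
      unfolding f_def by (rule borel_measurable_diff[OF assms(4)[OF that] borel_measurable_const])
    then show ?thesis
      unfolding pred_def by (rule borel_measurable_less[OF _ borel_measurable_const])
  qed
  have "Measurable.pred M approx"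
    unfolding approx_def
  proof (intro pred_intros_countable(1) pred_intros_logic(5) pred_intros_countable(2))
    show "Measurable.pred M (\<lambda>\<omega>. f \<omega> c < inverse (Suc k))" for k
      using False by (intro meas) auto
    show "Measurable.pred M (\<lambda>\<omega>. of_rat q \<in> {0..c} \<and> f \<omega> (of_rat q) < inverse (Suc k))" for q k
      by (intro pred_intros_conj1' meas) auto
  qed
  moreover have "hit_time \<alpha> X Z l \<omega> \<le> ereal c \<longleftrightarrow> approx \<omega>" if "\<omega> \<in> space M" for \<omega>
  proof -
    have "continuous_on {0..} (\<lambda>t. X \<omega> + Z t \<omega>)"
      using assms(3)[OF that] by (intro continuous_intros)
    from exists_nonpos_iff_rational_approx[OF assms(1,2) this, of c] False
    show ?thesis
      unfolding hit_time_le_iff[of l \<alpha> Z \<omega> X c, OF assms(1,2) assms(3)[OF that]] approx_def f_def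
      by simp
  qed
  then have "{\<omega> \<in> space M. hit_time \<alpha> X Z l \<omega> \<le> ereal c} = {\<omega> \<in> space M. approx \<omega>}"
    by blast
  ultimately show ?thesis
    by (simp add: pred_def)
qed

lemma hit_time_disc_le_measurable:
  assumes "\<Delta> > 0" "\<And>s. 0 \<le> s \<Longrightarrow> (\<lambda>\<omega>. X \<omega> + Z s \<omega>) \<in> borel_measurable M"
  shows "Measurable.pred M (\<lambda>\<omega>. hit_time_disc \<alpha> X Z \<Delta> l \<omega> \<le> ereal c)"
  unfolding hit_time_disc_le_iff[OF assms(1)]
proof (intro pred_intros_countable pred_intros_conj1')
  fix k :: nat
  have k: "0 \<le> \<Delta> * real k" using assms(1) by simp
  have "(\<lambda>\<omega>. X \<omega> + Z (\<Delta> * real k) \<omega> - \<alpha> * l (ereal (\<Delta> * real k))) \<in> borel_measurable M"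
    by (rule borel_measurable_diff[OF assms(2)[OF k] borel_measurable_const])
  then show "Measurable.pred M (\<lambda>\<omega>. X \<omega> + Z (\<Delta> * real k) \<omega> - \<alpha> * l (ereal (\<Delta> * real k)) \<le> 0)"
    unfolding pred_def by (rule borel_measurable_le[OF _ borel_measurable_const])
qed

lemma space_nat_filtration [simp]: "space (nat_filtration P Y t) = space P"
  unfolding nat_filtration_def by (rule space_measure_of) auto

lemma measurable_nat_filtration:
  assumes "0 \<le> q" "ereal q \<le> t"
  shows "Y q \<in> borel_measurable (nat_filtration P Y t)"
proof (rule measurableI)
  define G where "G = {Y s -` B \<inter> space P | s B. 0 \<le> s \<and> ereal s \<le> t \<and> B \<in> sets borel}"
  have G: "G \<subseteq> Pow (space P)" unfolding G_def by auto
  fix A :: "real set" assume "A \<in> sets borel"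
  with assms have "Y q -` A \<inter> space P \<in> G" unfolding G_def by blast
  then show "Y q -` A \<inter> space (nat_filtration P Y t) \<in> sets (nat_filtration P Y t)"
    unfolding nat_filtration_def G_def[symmetric] by (simp add: sets_measure_of[OF G] space_measure_of[OF G] sigma_sets.Basic)
qed simp

lemma stopping_time_hit_time:
  assumes "in_M l" "\<alpha> > 0" "\<And>\<omega>. \<omega> \<in> space P \<Longrightarrow> continuous_on {0..} (\<lambda>t. Z t \<omega>)"
  shows "stopping_time (nat_filtration P (\<lambda>s \<omega>. X \<omega> + Z s \<omega>)) (hit_time \<alpha> X Z l)"
  unfolding stopping_time_def
proof
  fix t :: ereal
  show "Measurable.pred (nat_filtration P (\<lambda>s \<omega>. X \<omega> + Z s \<omega>) t) (\<lambda>\<omega>. hit_time \<alpha> X Z l \<omega> \<le> t)"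
  proof (cases t)
    case (real c)
    show ?thesis unfolding real
      by (rule hit_time_le_measurable[OF assms(1,2)])
        (use assms(3) measurable_nat_filtration[where Y="\<lambda>s \<omega>. X \<omega> + Z s \<omega>"] real in auto)
  next
    case MInf
    have "\<not> hit_time \<alpha> X Z l \<omega> \<le> -\<infinity>" for \<omega>
      using hit_time_nonneg[of \<alpha> X Z l \<omega>] by auto
    then show ?thesis using MInf by (simp add: pred_def)
  qed (simp add: pred_def del: space_nat_filtration)
qed

section \<open>Convergence of the discretised hitting times\<close>

lemma eventually_hit_time_disc_gt:
  assumes "in_M l" "\<And>n. in_M (ls n)" "\<alpha> > 0" "conv_M ls l" "\<And>n. \<Delta> n > 0"
    and "continuous_on {0..} (\<lambda>t. Z t \<omega>)" "ereal r < hit_time \<alpha> X Z l \<omega>"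
  shows "eventually (\<lambda>n. ereal r < hit_time_disc \<alpha> X Z (\<Delta> n) (ls n) \<omega>) sequentially"
proof -
  have "0 < X \<omega> + Z s \<omega> - \<alpha> * l (ereal s)" if "s \<in> {0..r}" for s
    using hit_time_le_iff[of l \<alpha> Z \<omega> X r] assms that by (auto simp: not_le)
  then have "eventually (\<lambda>n. \<forall>v\<in>{0..r}. 0 < X \<omega> + Z v \<omega> - \<alpha> * ls n (ereal v)) sequentially"
    using assms(6) by (intro conv_M_eventually_pos_on_Icc[OF assms(1-4)] continuous_intros)
  then show ?thesis
  proof eventually_elim
    case (elim n)
    show ?case
      unfolding not_le[symmetric] hit_time_disc_le_iff[OF assms(5)]
    proof
      assume "\<exists>k. \<Delta> n * real k \<le> r \<and> X \<omega> + Z (\<Delta> n * real k) \<omega> - \<alpha> * ls n (ereal (\<Delta> n * real k)) \<le> 0"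
      then obtain k where k: "\<Delta> n * real k \<le> r"
        "X \<omega> + Z (\<Delta> n * real k) \<omega> - \<alpha> * ls n (ereal (\<Delta> n * real k)) \<le> 0"
        by blast
      have "0 \<le> \<Delta> n * real k" using assms(5)[of n] by simp
      with k(1) elim have "0 < X \<omega> + Z (\<Delta> n * real k) \<omega> - \<alpha> * ls n (ereal (\<Delta> n * real k))"
        by auto
      with k(2) show False by linarith
    qed
  qed
qed

lemma eventually_hit_time_disc_le:
  assumes "in_M l" "\<And>n. in_M (ls n)" "\<alpha> > 0" "conv_M ls l" "\<And>n. \<Delta> n > 0" "\<Delta> \<longlonglongrightarrow> 0"
    and "continuous_on {0..} (\<lambda>t. Z t \<omega>)" "hit_time \<alpha> X Z l \<omega> = ereal a" "a < w" "Z w \<omega> < Z a \<omega>"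
  shows "eventually (\<lambda>n. hit_time_disc \<alpha> X Z (\<Delta> n) (ls n) \<omega> \<le> ereal w) sequentially"
proof -
  have "0 \<le> a" using hit_time_nonneg[of \<alpha> X Z l \<omega>] assms(8) by simp
  have at_a: "X \<omega> + Z a \<omega> - \<alpha> * l (ereal a) \<le> 0"
    using nonpos_at_hit_time[of l \<alpha> Z \<omega> X a] assms by simp
  define c where "c = (\<alpha> * l (ereal a) - (X \<omega> + Z w \<omega>)) / 3"
  have "c > 0" using at_a assms(10) unfolding c_def by simp
  have "continuous_on {0..} (\<lambda>t. X \<omega> + Z t \<omega>)"
    using assms(7) by (intro continuous_intros)
  moreover have "w \<in> {0..}" using assms(9) \<open>0 \<le> a\<close> by simp
  ultimately have "continuous (at w within {0..}) (\<lambda>t. X \<omega> + Z t \<omega>)"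
    using continuous_on_eq_continuous_within by blast
  then obtain d where "d > 0" and d: "\<And>v. v \<in> {0..} \<Longrightarrow> dist v w < d \<Longrightarrow>
      dist (X \<omega> + Z v \<omega>) (X \<omega> + Z w \<omega>) < c"
    using \<open>c > 0\<close> unfolding continuous_within_eps_delta by blast
  define d' where "d' = min d ((w - a) / 2)"
  have "0 < d'" "d' \<le> d" "a < w - d'" using \<open>d > 0\<close> assms(9) by (auto simp: d'_def min_def field_simps)
  have "eventually (\<lambda>n. \<forall>v\<ge>w - d'. l (ereal a) - c / \<alpha> < ls n (ereal v)) sequentially"
    using \<open>0 \<le> a\<close> \<open>a < w - d'\<close> \<open>c > 0\<close> assms(3)
    by (intro conv_M_eventually_lower_bound[OF assms(1,2,4)]) auto
  moreover have "eventually (\<lambda>n. \<Delta> n < d') sequentially"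
    using \<open>0 < d'\<close> by (intro order_tendstoD(2)[OF assms(6)])
  ultimately show ?thesis
  proof eventually_elim
    case (elim n)
    obtain k :: nat where k: "w - \<Delta> n < \<Delta> n * real k" "\<Delta> n * real k \<le> w"
      using grid_point_below[OF assms(5)[of n], of w] \<open>0 \<le> a\<close> assms(9) by auto
    define g where "g = \<Delta> n * real k"
    have "g \<le> w" "w - d' < g" using k elim unfolding g_def by auto
    then have "X \<omega> + Z g \<omega> < X \<omega> + Z w \<omega> + c"
      using d[of g] \<open>d' \<le> d\<close> \<open>a < w - d'\<close> \<open>0 \<le> a\<close> by (auto simp: dist_real_def)
    moreover have "l (ereal a) - c / \<alpha> < ls n (ereal g)"
      using elim(1) \<open>w - d' < g\<close> by auto
    then have "\<alpha> * l (ereal a) - c < \<alpha> * ls n (ereal g)"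
      using assms(3) by (simp add: field_simps)
    ultimately have "X \<omega> + Z g \<omega> - \<alpha> * ls n (ereal g) \<le> 0"
      using c_def \<open>c > 0\<close> by (simp add: field_simps)
    with \<open>g \<le> w\<close> show ?case
      unfolding hit_time_disc_le_iff[OF assms(5)] g_def by blast
  qed
qed

lemma AE_eventually_hit_time_disc_le:
  assumes "in_M l" "\<And>n. in_M (ls n)" "\<alpha> > 0" "conv_M ls l" "\<And>n. \<Delta> n > 0" "\<Delta> \<longlonglongrightarrow> 0"
    and cont: "\<And>\<omega>. \<omega> \<in> space P \<Longrightarrow> continuous_on {0..} (\<lambda>t. Z t \<omega>)"
    and "crossing_property P X Z"
  shows "AE \<omega> in P. \<forall>r. hit_time \<alpha> X Z l \<omega> < ereal r \<longrightarrow>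
    eventually (\<lambda>n. hit_time_disc \<alpha> X Z (\<Delta> n) (ls n) \<omega> \<le> ereal r) sequentially"
proof -
  let ?\<tau> = "hit_time \<alpha> X Z l"
  have "AE \<omega> in P. \<not> (?\<tau> \<omega> < \<infinity> \<and>
      (INF s\<in>{0..h}. Z (real_of_ereal (?\<tau> \<omega>) + s) \<omega> - Z (real_of_ereal (?\<tau> \<omega>)) \<omega>) = 0)" if "h > 0" for h
  proof -
    have "stopping_time (nat_filtration P (\<lambda>s \<omega>. X \<omega> + Z s \<omega>)) ?\<tau>"
      by (rule stopping_time_hit_time[OF assms(1,3)]) (rule cont)
    with assms(8) that show ?thesis unfolding crossing_property_def by blast
  qed
  then have "AE \<omega> in P. \<forall>m::nat. \<not> (?\<tau> \<omega> < \<infinity> \<and>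
      (INF s\<in>{0..1 / Suc m}. Z (real_of_ereal (?\<tau> \<omega>) + s) \<omega> - Z (real_of_ereal (?\<tau> \<omega>)) \<omega>) = 0)"
    unfolding AE_all_countable by simp
  with AE_space show ?thesis
  proof eventually_elim
    case (elim \<omega>)
    show ?case
    proof (intro allI impI)
      fix r assume "?\<tau> \<omega> < ereal r"
      then obtain a where a: "?\<tau> \<omega> = ereal a" "a < r" "0 \<le> a"
        using hit_time_nonneg[of \<alpha> X Z l \<omega>] by (cases "?\<tau> \<omega>") auto
      obtain m :: nat where m: "inverse (Suc m) < r - a"
        using reals_Archimedean[of "r - a"] a(2) by auto
      have "continuous_on {a..a + 1 / Suc m} (\<lambda>t. Z t \<omega>)"
        using a(3) by (intro continuous_on_subset[OF cont[OF elim(1)]]) auto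
      moreover have "(INF s\<in>{0..1 / Suc m}. Z (a + s) \<omega> - Z a \<omega>) \<noteq> 0"
        using elim(2) a(1) by auto
      ultimately obtain w where w: "a < w" "w \<le> a + 1 / Suc m" "Z w \<omega> < Z a \<omega>"
        using exists_less_of_INF_ne_zero[of a "1 / Suc m" "\<lambda>t. Z t \<omega>"] by auto
      have "w < r" using w(2) m by (simp add: inverse_eq_divide)
      have "eventually (\<lambda>n. hit_time_disc \<alpha> X Z (\<Delta> n) (ls n) \<omega> \<le> ereal w) sequentially"
        by (rule eventually_hit_time_disc_le[OF assms(1-6) cont[OF elim(1)] a(1) w(1,3)])
      then show "eventually (\<lambda>n. hit_time_disc \<alpha> X Z (\<Delta> n) (ls n) \<omega> \<le> ereal r) sequentially"
        by (rule eventually_mono) (erule order_trans, use \<open>w < r\<close> in simp)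
    qed
  qed
qed

lemma tendsto_Gam_disc:
  assumes "prob_space P" "\<alpha> > 0" "X \<in> borel_measurable P" "\<And>t. 0 \<le> t \<Longrightarrow> Z t \<in> borel_measurable P"
    and cont: "\<And>\<omega>. \<omega> \<in> space P \<Longrightarrow> continuous_on {0..} (\<lambda>t. Z t \<omega>)"
    and "crossing_property P X Z" "\<And>n. \<Delta> n > 0" "\<Delta> \<longlonglongrightarrow> 0"
    and "\<And>n. in_M (ls n)" "in_M l" "conv_M ls l"
    and Gam_cont: "isCont (Gam P \<alpha> X Z l) (ereal r)"
  shows "(\<lambda>n. Gam_disc P \<alpha> X Z (\<Delta> n) (ls n) (ereal r)) \<longlonglongrightarrow> Gam P \<alpha> X Z l (ereal r)"
proof -
  interpret prob_space P by fact
  have Y: "(\<lambda>\<omega>. X \<omega> + Z s \<omega>) \<in> borel_measurable P" if "0 \<le> s" for s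
    using assms(3) assms(4)[OF that] by (rule borel_measurable_add)
  show ?thesis
    unfolding Gam_def Gam_disc_def
  proof (rule tendsto_measure_of_eventually[where B = "\<lambda>c \<omega>. hit_time \<alpha> X Z l \<omega> \<le> ereal c"])
    show "Measurable.pred P (\<lambda>\<omega>. hit_time \<alpha> X Z l \<omega> \<le> ereal c)" for c
      by (rule hit_time_le_measurable[OF assms(10,2) cont Y])
    show "Measurable.pred P (\<lambda>\<omega>. hit_time_disc \<alpha> X Z (\<Delta> n) (ls n) \<omega> \<le> ereal r)" for n
      by (rule hit_time_disc_le_measurable[OF assms(7) Y])
    show "AE \<omega> in P. \<not> hit_time \<alpha> X Z l \<omega> \<le> ereal r \<longrightarrow>
        eventually (\<lambda>n. \<not> hit_time_disc \<alpha> X Z (\<Delta> n) (ls n) \<omega> \<le> ereal r) sequentially"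
      unfolding not_le
      by (intro AE_I2 impI eventually_hit_time_disc_gt[OF assms(10,9,2,11)] assms(7) cont)
    have crossing: "AE \<omega> in P. \<forall>r. hit_time \<alpha> X Z l \<omega> < ereal r \<longrightarrow>
        eventually (\<lambda>n. hit_time_disc \<alpha> X Z (\<Delta> n) (ls n) \<omega> \<le> ereal r) sequentially"
      by (intro AE_eventually_hit_time_disc_le[OF assms(10,9,2,11)] cont assms(6-8))
    show "AE \<omega> in P. hit_time \<alpha> X Z l \<omega> \<le> ereal c \<longrightarrow>
        eventually (\<lambda>n. hit_time_disc \<alpha> X Z (\<Delta> n) (ls n) \<omega> \<le> ereal r) sequentially" if "c < r" for c
    proof -
      from that have "ereal c < ereal r" by simp
      from crossing show ?thesis
        by eventually_elim (use \<open>ereal c < ereal r\<close> in \<open>blast intro: le_less_trans\<close>)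
    qed
    show "\<exists>c<r. a < measure P {\<omega> \<in> space P. hit_time \<alpha> X Z l \<omega> \<le> ereal c}"
      if "a < measure P {\<omega> \<in> space P. hit_time \<alpha> X Z l \<omega> \<le> ereal r}" for a
      using isCont_ereal_approx_left[OF Gam_cont] that by (simp add: Gam_def)
  qed
qed

theorem proposition2p11:
  fixes P :: "'a measure" and \<alpha> :: real and X :: "'a \<Rightarrow> real" and Z :: "real \<Rightarrow> 'a \<Rightarrow> real"
    and \<Delta> :: "nat \<Rightarrow> real" and ls :: "nat \<Rightarrow> ereal \<Rightarrow> real" and l :: "ereal \<Rightarrow> real"
  assumes "prob_space P"
    and "\<alpha> > 0"
    and "X \<in> borel_measurable P"
    and "\<And>t. 0 \<le> t \<Longrightarrow> Z t \<in> borel_measurable P"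
    and "\<And>\<omega>. \<omega> \<in> space P \<Longrightarrow> continuous_on {0..} (\<lambda>t. Z t \<omega>)"
    and "\<And>\<omega>. \<omega> \<in> space P \<Longrightarrow> Z 0 \<omega> = 0"
    and "prob_space.indep_set P {X -` A \<inter> space P | A. A \<in> sets borel}
         {(\<lambda>\<omega>. restrict (\<lambda>t. Z t \<omega>) {0..}) -` B \<inter> space P | B. B \<in> sets (PiM {0..} (\<lambda>_. borel))}"
    and "crossing_property P X Z"
    and "\<And>n. \<Delta> n > 0" and "\<Delta> \<longlonglongrightarrow> 0"
    and "\<And>n. in_M (ls n)" and "in_M l"
    and "conv_M ls l"
  shows "conv_M (\<lambda>n. Gam_disc P \<alpha> X Z (\<Delta> n) (ls n)) (Gam P \<alpha> X Z l)"
proof (unfold conv_M_def, intro allI impI)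
  fix t :: ereal assume "0 \<le> t" "isCont (Gam P \<alpha> X Z l) t"
  then show "(\<lambda>n. Gam_disc P \<alpha> X Z (\<Delta> n) (ls n) t) \<longlonglongrightarrow> Gam P \<alpha> X Z l t"
    using tendsto_Gam_disc[OF assms(1-5,8-13)] by (cases t) (simp_all add: Gam_def Gam_disc_def)
qed

end
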